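(* Let $w_0,w_1,w_2,\dots$ be complex numbers. If $f\in L^2([0,1])$ satisfies $\int_0^1x^nf(x)\,dx=w_n$ for all $n\ge0$, then $Uf\in H^2$ satisfies $Uf(\frac{n}{n+1})=(n+1)w_n$ for all $n\ge0$. If $h\in H^2$ satisfies $h(\frac{n}{n+1})=w_n$ for all $n\ge0$, then $U^*h\in L^2([0,1])$ satisfies $\int_0^1x^n\,U^*h(x)\,dx=\frac{1}{n+1}w_n$ for all $n\ge0$.
   Context: $H^2$ is the Hardy space of the unit disc $\mathbb{D}$, with Szegő kernel $k_\alpha(z)=\frac{1}{1-\bar\alpha z}$. The Sarason transform $U$ is the unique unitary operator from $L^2([0,1])$ onto $H^2$ with $U(x^n)=\frac{1}{n+1}k_{\frac{n}{n+1}}$ for all integers $n\ge0$. *)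

theory Defs
  imports "HOL-Analysis.Analysis"
begin

definition L2_01 :: "(real \<Rightarrow> complex) set" where
  "L2_01 = {f. f \<in> borel_measurable (lebesgue_on {0..1}) \<and>
               integrable (lebesgue_on {0..1}) (\<lambda>x. (cmod (f x))\<^sup>2)}"

definition L2_inner :: "(real \<Rightarrow> complex) \<Rightarrow> (real \<Rightarrow> complex) \<Rightarrow> complex" where
  "L2_inner f g = (LINT x | lebesgue_on {0..1}. f x * cnj (g x))"

definition monomial :: "nat \<Rightarrow> real \<Rightarrow> complex" where
  "monomial n = (\<lambda>x. complex_of_real (x ^ n))"

definition taylor_coeff :: "(complex \<Rightarrow> complex) \<Rightarrow> nat \<Rightarrow> complex" where
  "taylor_coeff f n = (deriv ^^ n) f 0 / of_nat (fact n)"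

definition H2 :: "(complex \<Rightarrow> complex) set" where
  "H2 = {f. f holomorphic_on ball 0 1 \<and> summable (\<lambda>n. (cmod (taylor_coeff f n))\<^sup>2)}"

definition H2_inner :: "(complex \<Rightarrow> complex) \<Rightarrow> (complex \<Rightarrow> complex) \<Rightarrow> complex" where
  "H2_inner f g = (\<Sum>n. taylor_coeff f n * cnj (taylor_coeff g n))"

definition szego :: "complex \<Rightarrow> complex \<Rightarrow> complex" where
  "szego \<alpha> z = 1 / (1 - cnj \<alpha> * z)"

text \<open>U is a unitary operator from L^2([0,1]) onto H^2 (elements of H^2 are compared
  on the open unit disc only) with U(x^n) = 1/(n+1) k_{n/(n+1)}.  By the context such U
  exists and is unique; we characterise it by these properties.\<close>
definition sarason_transform :: "((real \<Rightarrow> complex) \<Rightarrow> (complex \<Rightarrow> complex)) \<Rightarrow> bool" where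
  "sarason_transform U \<longleftrightarrow>
     (\<forall>f\<in>L2_01. U f \<in> H2) \<and>
     (\<forall>f\<in>L2_01. \<forall>g\<in>L2_01. \<forall>a::complex. \<forall>z\<in>ball 0 1.
        U (\<lambda>x. a * f x + g x) z = a * U f z + U g z) \<and>
     (\<forall>f\<in>L2_01. \<forall>g\<in>L2_01. H2_inner (U f) (U g) = L2_inner f g) \<and>
     (\<forall>h\<in>H2. \<exists>f\<in>L2_01. \<forall>z\<in>ball 0 1. U f z = h z) \<and>
     (\<forall>n::nat. \<forall>z\<in>ball 0 1.
        U (monomial n) z = szego (of_real (real n / real (n + 1))) z / of_nat (n + 1))"

text \<open>g represents U^* h: the adjoint relation <U f, h> = <f, g> for all f in L^2.\<close>
definition is_adjoint_image ::
  "((real \<Rightarrow> complex) \<Rightarrow> (complex \<Rightarrow> complex)) \<Rightarrow> (complex \<Rightarrow> complex) \<Rightarrow> (real \<Rightarrow> complex) \<Rightarrow> bool" where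
  "is_adjoint_image U h g \<longleftrightarrow> g \<in> L2_01 \<and> (\<forall>f\<in>L2_01. H2_inner (U f) h = L2_inner f g)"

end

theory Submission imports Defs "HOL-Complex_Analysis.Complex_Analysis" begin

text \<open>The Szego kernel k_\<alpha> has Taylor coefficients cnj \<alpha> ^ k, so the H^2 inner product of h
  with k_\<alpha> is the Taylor series of h summed at \<alpha>.  As U (x^n) = k_\<alpha> / (n+1) with the real point
  \<alpha> = n/(n+1), the isometry applied to (f, x^n) gives U f \<alpha> / (n+1) = <f, x^n>, and the adjoint
  relation applied to (x^n, g) gives the conjugate of h \<alpha> / (n+1) = <g, x^n>.\<close>

lemma taylor_coeff_cong:
  assumes "0 < r" and "\<forall>z\<in>ball 0 r. f z = g z"
  shows "taylor_coeff f k = taylor_coeff g k"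
proof -
  have "eventually (\<lambda>z. f z = g z) (nhds 0)"
    using assms eventually_nhds_in_open[of "ball 0 r" 0] by (auto elim: eventually_mono)
  then show ?thesis
    unfolding taylor_coeff_def by (simp add: higher_deriv_cong_ev)
qed

lemma taylor_coeff_szego:
  assumes "norm \<alpha> \<le> 1"
  shows "taylor_coeff (\<lambda>z. c * szego \<alpha> z) k = c * cnj \<alpha> ^ k"
proof -
  define F where "F = Abs_fps (\<lambda>k. c * cnj \<alpha> ^ k)"
  have "summable (\<lambda>k. c * (cnj \<alpha> * (1/2)) ^ k)"
    using assms by (intro summable_mult summable_geometric) (simp add: norm_mult)
  then have "summable (\<lambda>k. c * cnj \<alpha> ^ k * (1/2) ^ k)"
    by (simp only: power_mult_distrib mult.assoc)
  then have "conv_radius (\<lambda>k. c * cnj \<alpha> ^ k) \<ge> norm (1/2 :: complex)"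
    by (rule conv_radius_geI)
  then have radius: "fps_conv_radius F > 0"
    unfolding F_def fps_conv_radius_def
    using order.strict_trans2[of 0 "ereal (1/2)"] by (simp add: zero_ereal_def)
  have "eval_fps F z = c * szego \<alpha> z" if "z \<in> ball 0 1" for z
  proof -
    have "norm (cnj \<alpha> * z) \<le> norm z"
      using assms by (simp add: norm_mult mult_left_le_one_le)
    also have "\<dots> < 1"
      using that by simp
    finally have "norm (cnj \<alpha> * z) < 1" .
    then have "(\<lambda>k. c * (cnj \<alpha> * z) ^ k) sums (c * (1 / (1 - cnj \<alpha> * z)))"
      by (intro sums_mult geometric_sums)
    then show ?thesis
      unfolding eval_fps_def F_def szego_def by (simp add: sums_iff power_mult_distrib mult.assoc)
  qed
  then have "taylor_coeff (eval_fps F) k = taylor_coeff (\<lambda>z. c * szego \<alpha> z) k"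
    by (intro taylor_coeff_cong[of 1]) auto
  with fps_nth_conv_deriv[OF radius, of k] show ?thesis
    unfolding taylor_coeff_def F_def by simp
qed

lemma H2_taylor_sums:
  assumes "h \<in> H2" and "z \<in> ball 0 1"
  shows "(\<lambda>k. taylor_coeff h k * z ^ k) sums h z"
  using holomorphic_power_series[of h 0 1 z] assms
  unfolding H2_def taylor_coeff_def by simp

lemma H2_inner_szego_sums:
  assumes "h \<in> H2" and "\<alpha> \<in> ball 0 1"
  shows "(\<lambda>k. taylor_coeff h k * cnj (taylor_coeff (\<lambda>z. c * szego \<alpha> z) k)) sums (cnj c * h \<alpha>)"
proof -
  have "(\<lambda>k. cnj c * (taylor_coeff h k * \<alpha> ^ k)) sums (cnj c * h \<alpha>)"
    by (intro sums_mult H2_taylor_sums assms)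
  moreover have "norm \<alpha> \<le> 1"
    using assms(2) by simp
  ultimately show ?thesis
    by (simp add: taylor_coeff_szego mult_ac)
qed

lemma H2_inner_szego:
  assumes "h \<in> H2" and "\<alpha> \<in> ball 0 1"
  shows "H2_inner h (\<lambda>z. c * szego \<alpha> z) = cnj c * h \<alpha>"
  using H2_inner_szego_sums[OF assms] unfolding H2_inner_def by (simp add: sums_iff)

lemma H2_inner_szego_left:
  assumes "h \<in> H2" and "\<alpha> \<in> ball 0 1"
  shows "H2_inner (\<lambda>z. c * szego \<alpha> z) h = c * cnj (h \<alpha>)"
  using H2_inner_szego_sums[OF assms, THEN sums_cnj[THEN iffD2]]
  unfolding H2_inner_def by (simp add: sums_iff mult.commute)

lemma taylor_coeff_sarason_monomial:
  assumes "sarason_transform U"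
  shows "taylor_coeff (U (monomial n))
           = taylor_coeff (\<lambda>z. 1 / of_nat (n + 1) * szego (of_real (real n / real (n + 1))) z)"
  using assms unfolding sarason_transform_def
  by (intro ext taylor_coeff_cong[of 1]) auto

lemma
  assumes "sarason_transform U" and "h \<in> H2"
  shows H2_inner_sarason_monomial:
      "H2_inner h (U (monomial n)) = h (of_real (real n / real (n + 1))) / of_nat (n + 1)"
    and H2_inner_sarason_monomial_left:
      "H2_inner (U (monomial n)) h = cnj (h (of_real (real n / real (n + 1)))) / of_nat (n + 1)"
proof -
  define \<alpha> :: complex where "\<alpha> = of_real (real n / real (n + 1))"
  define kernel where "kernel = (\<lambda>z. 1 / of_nat (n + 1) * szego \<alpha> z)"
  have "\<alpha> \<in> ball 0 1"
    unfolding \<alpha>_def by (simp only: mem_ball_0 norm_of_real) simp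
  moreover have "H2_inner h (U (monomial n)) = H2_inner h kernel"
    and "H2_inner (U (monomial n)) h = H2_inner kernel h"
    unfolding H2_inner_def kernel_def \<alpha>_def taylor_coeff_sarason_monomial[OF assms(1)] by simp_all
  ultimately show "H2_inner h (U (monomial n)) = h (of_real (real n / real (n + 1))) / of_nat (n + 1)"
    and "H2_inner (U (monomial n)) h = cnj (h (of_real (real n / real (n + 1)))) / of_nat (n + 1)"
    unfolding kernel_def
    by (simp_all only: H2_inner_szego[OF assms(2)] H2_inner_szego_left[OF assms(2)]) (simp_all add: \<alpha>_def)
qed

lemma monomial_in_L2_01: "monomial n \<in> L2_01"
proof -
  have "continuous_on {0..1::real} (\<lambda>x. (cmod (monomial n x))\<^sup>2)"
    unfolding monomial_def by (intro continuous_intros)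
  then have "(\<lambda>x. (cmod (monomial n x))\<^sup>2) absolutely_integrable_on {0..1::real}"
    by (rule absolutely_integrable_continuous_real)
  then have "integrable (lebesgue_on {0..1}) (\<lambda>x. (cmod (monomial n x))\<^sup>2)"
    by (simp add: integrable_restrict_space set_integrable_def)
  moreover have "monomial n \<in> borel_measurable (lebesgue_on {0..1})"
    unfolding monomial_def
    by (intro continuous_imp_measurable_on_sets_lebesgue continuous_intros) auto
  ultimately show ?thesis
    unfolding L2_01_def by auto
qed

lemma L2_inner_monomial:
  "L2_inner f (monomial n) = (LINT x | lebesgue_on {0..1}. monomial n x * f x)"
  unfolding L2_inner_def monomial_def by (simp add: mult.commute)

lemma L2_inner_monomial_left:
  "L2_inner (monomial n) g = cnj (LINT x | lebesgue_on {0..1}. monomial n x * g x)"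
proof -
  have "cnj (LINT x | lebesgue_on {0..1}. monomial n x * g x)
      = (LINT x | lebesgue_on {0..1}. cnj (monomial n x * g x))"
    by (rule Bochner_Integration.integral_cnj[symmetric])
  then show ?thesis
    unfolding L2_inner_def by (simp add: monomial_def)
qed

theorem proposition2p2:
  fixes U :: "(real \<Rightarrow> complex) \<Rightarrow> (complex \<Rightarrow> complex)"
    and w :: "nat \<Rightarrow> complex"
  assumes "sarason_transform U"
  shows "(\<forall>f\<in>L2_01. (\<forall>n. (LINT x | lebesgue_on {0..1}. monomial n x * f x) = w n) \<longrightarrow>
            (\<forall>n. U f (of_real (real n / real (n + 1))) = of_nat (n + 1) * w n))
       \<and> (\<forall>h\<in>H2. \<forall>g. is_adjoint_image U h g \<longrightarrow>
            (\<forall>n. h (of_real (real n / real (n + 1))) = w n) \<longrightarrow>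
            (\<forall>n. (LINT x | lebesgue_on {0..1}. monomial n x * g x) = w n / of_nat (n + 1)))"
proof (intro conjI ballI allI impI)
  fix f n
  assume f: "f \<in> L2_01" and moments: "\<forall>n. (LINT x | lebesgue_on {0..1}. monomial n x * f x) = w n"
  have "U f (of_real (real n / real (n + 1))) / of_nat (n + 1) = H2_inner (U f) (U (monomial n))"
    using assms f by (simp add: H2_inner_sarason_monomial sarason_transform_def)
  also have "\<dots> = L2_inner f (monomial n)"
    using assms f monomial_in_L2_01 by (simp add: sarason_transform_def)
  also have "\<dots> = w n"
    using moments by (simp add: L2_inner_monomial)
  finally show "U f (of_real (real n / real (n + 1))) = of_nat (n + 1) * w n"
    by (simp only: divide_eq_eq of_nat_eq_0_iff) (simp add: mult.commute)
next
  fix h g n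
  assume h: "h \<in> H2" and adjoint: "is_adjoint_image U h g"
    and interpolates: "\<forall>n. h (of_real (real n / real (n + 1))) = w n"
  have "cnj (LINT x | lebesgue_on {0..1}. monomial n x * g x) = L2_inner (monomial n) g"
    by (simp add: L2_inner_monomial_left)
  also have "\<dots> = H2_inner (U (monomial n)) h"
    using adjoint monomial_in_L2_01 unfolding is_adjoint_image_def by simp
  also have "\<dots> = cnj (w n) / of_nat (n + 1)"
    using assms h interpolates by (simp add: H2_inner_sarason_monomial_left)
  finally show "(LINT x | lebesgue_on {0..1}. monomial n x * g x) = w n / of_nat (n + 1)"
    by (metis complex_cnj_cnj complex_cnj_divide complex_cnj_of_nat)
qed

end
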